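(* Let $(Y_k)_{k\ge0}$ be a sequence in $\{0,1\}$, and let $a_0\ge0$, $\eta\in(0,1)$, $p\in(0,1]$, $(\nu_k)_k\in\ell^1_+$, $(\varepsilon_k)_k\in\ell^p_+$. Define $a_{k+1}:=(\eta+\nu_k)^{Y_k}a_k+Y_k\varepsilon_k$ for $k\in\mathbb N_0$, and $C_\nu:=\exp\big(\eta^{-1}\sum_{i=0}^\infty\nu_i\big)$. Then for all $R\ge1$, $k\ge0$ and $q\in[p,1]$, $$a_{k+1}\le C_\nu\Big[a_0+\sum_{j=0}^\infty\varepsilon_j\Big]\quad\text{and}\quad\sum_{k=0}^{R-1}Y_ka_{k+1}^q\le\frac{C_\nu^q}{1-\eta^q}\Big[(\eta a_0)^q+\sum_{j=0}^\infty\varepsilon_j^q\Big].$$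
   Context: $\ell^p_+$ denotes the set of nonnegative sequences $(x_n)_{n\ge0}$ with $\sum_nx_n^p<\infty$. *)

theory Defs
  imports "HOL-Analysis.Analysis"
begin

end

theory Submission
  imports Defs
begin

text \<open>Dividing out the perturbation factors 1 + nu_k/eta leaves a product bounded by
  C = exp(sum nu / eta), so a_k <= C c_k where c solves the unperturbed recursion
  c_(k+1) = eta^(Y_k) c_k + Y_k eps_k. Since eta <= 1, c_k never exceeds c_0 + sum eps.
  For the second bound, subadditivity of t |-> t^q gives
  c_(k+1)^q <= eta^q c_k^q + eps_k^q at every active step, so the potential
  (1 - eta^q) sum_(i<R) Y_i c_(i+1)^q + eta^q c_R^q grows by at most eps_R^q per step.\<close>

lemma powr_add_le_add_powr:
  fixes x y q :: real
  assumes "0 \<le> x" "0 \<le> y" "0 < q" "q \<le> 1"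
  shows "(x + y) powr q \<le> x powr q + y powr q"
proof (cases "x + y = 0")
  case True
  then show ?thesis using assms by simp
next
  case False
  define s where "s = x + y"
  have s: "s > 0" using False assms unfolding s_def by auto
  have frac_le_powr: "t / s \<le> (t / s) powr q" if "0 \<le> t" "t \<le> s" for t
  proof -
    have "(t/s) powr 1 \<le> (t/s) powr q"
      by (rule powr_mono') (use that s assms in \<open>auto simp: field_simps\<close>)
    then show ?thesis using that s by simp
  qed
  have "x / s + y / s = 1" using s by (simp add: s_def add_divide_distrib[symmetric])
  then have "s powr q = s powr q * (x / s + y / s)" by simp
  also have "\<dots> \<le> s powr q * ((x/s) powr q + (y/s) powr q)"
    using frac_le_powr[of x] frac_le_powr[of y] assms
    by (intro mult_left_mono add_mono) (auto simp: s_def)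
  also have "\<dots> = x powr q + y powr q"
    using s assms by (simp add: powr_divide distrib_left)
  finally show ?thesis by (simp add: s_def)
qed

lemma summable_powr_larger_exponent:
  fixes \<epsilon> :: "nat \<Rightarrow> real"
  assumes "\<And>k. \<epsilon> k \<ge> 0" "0 < p" "p \<le> q" and "summable (\<lambda>k. \<epsilon> k powr p)"
  shows "summable (\<lambda>k. \<epsilon> k powr q)"
proof (rule summable_comparison_test_ev[OF _ assms(4)])
  have "(\<lambda>k. \<epsilon> k powr p) \<longlonglongrightarrow> 0" using assms(4) by (rule summable_LIMSEQ_zero)
  then have "\<forall>\<^sub>F k in sequentially. \<epsilon> k powr p < 1" by (rule order_tendstoD) simp
  then show "\<forall>\<^sub>F k in sequentially. norm (\<epsilon> k powr q) \<le> \<epsilon> k powr p"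
  proof (rule eventually_mono)
    fix k assume small: "\<epsilon> k powr p < 1"
    have "\<epsilon> k \<le> 1"
    proof (rule ccontr)
      assume "\<not> \<epsilon> k \<le> 1"
      then have "1 < \<epsilon> k powr p" using assms(2) powr_less_mono2[of p 1 "\<epsilon> k"] by simp
      then show False using small by simp
    qed
    then show "norm (\<epsilon> k powr q) \<le> \<epsilon> k powr p"
      using assms(1-3) by (simp add: powr_mono')
  qed
qed

lemma prod_one_plus_power_le_exp_suminf:
  fixes x :: "nat \<Rightarrow> real" and Y :: "nat \<Rightarrow> nat"
  assumes "\<And>k. Y k \<in> {0, 1}" "\<And>k. x k \<ge> 0" "summable x"
  shows "(\<Prod>i<k. (1 + x i) ^ Y i) \<le> exp (\<Sum>i. x i)"
proof -
  have "(\<Prod>i<k. (1 + x i) ^ Y i) \<le> (\<Prod>i<k. exp (x i))"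
  proof (rule prod_mono)
    fix i
    have "(1 + x i) ^ Y i \<le> 1 + x i" using assms(1,2)[of i] by auto
    also have "\<dots> \<le> exp (x i)" by (rule exp_ge_add_one_self)
    finally show "0 \<le> (1 + x i) ^ Y i \<and> (1 + x i) ^ Y i \<le> exp (x i)"
      using assms(2)[of i] by simp
  qed
  also have "\<dots> = exp (\<Sum>i<k. x i)" by (simp add: exp_sum)
  also have "\<dots> \<le> exp (\<Sum>i. x i)" using assms(2,3) by (simp add: sum_le_suminf)
  finally show ?thesis .
qed

primrec damped_seq :: "real \<Rightarrow> (nat \<Rightarrow> nat) \<Rightarrow> (nat \<Rightarrow> real) \<Rightarrow> real \<Rightarrow> nat \<Rightarrow> real" where
  "damped_seq \<eta> Y \<epsilon> c\<^sub>0 0 = c\<^sub>0"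
| "damped_seq \<eta> Y \<epsilon> c\<^sub>0 (Suc k) = \<eta> ^ Y k * damped_seq \<eta> Y \<epsilon> c\<^sub>0 k + real (Y k) * \<epsilon> k"

lemma damped_seq_nonneg:
  assumes "c\<^sub>0 \<ge> 0" "\<eta> \<ge> 0" "\<And>k. \<epsilon> k \<ge> 0"
  shows "damped_seq \<eta> Y \<epsilon> c\<^sub>0 k \<ge> 0"
  by (induction k) (use assms in auto)

lemma perturbed_le_prod_damped_seq:
  fixes a \<nu> \<epsilon> :: "nat \<Rightarrow> real" and Y :: "nat \<Rightarrow> nat"
  assumes "0 < \<eta>" "\<And>k. \<nu> k \<ge> 0" "\<And>k. \<epsilon> k \<ge> 0"
    and rec: "\<And>k. a (Suc k) = (\<eta> + \<nu> k) ^ Y k * a k + real (Y k) * \<epsilon> k"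
  shows "a k \<le> (\<Prod>i<k. (1 + \<nu> i / \<eta>) ^ Y i) * damped_seq \<eta> Y \<epsilon> (a 0) k"
proof (induction k)
  case 0
  then show ?case by simp
next
  case (Suc k)
  define P where "P k = (\<Prod>i<k. (1 + \<nu> i / \<eta>) ^ Y i)" for k
  define f where "f = (1 + \<nu> k / \<eta>) ^ Y k"
  have "P (Suc k) \<ge> 1"
    unfolding P_def using assms(1,2) by (intro prod_ge_1) auto
  then have eps_le: "real (Y k) * \<epsilon> k \<le> P (Suc k) * (real (Y k) * \<epsilon> k)"
    using mult_right_mono[of 1 "P (Suc k)" "real (Y k) * \<epsilon> k"] assms(3)[of k] by simp
  have "(\<eta> + \<nu> k) ^ Y k = \<eta> ^ Y k * f"
    using assms(1) by (simp add: f_def power_mult_distrib[symmetric] field_simps)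
  then have "a (Suc k) = f * (\<eta> ^ Y k * a k) + real (Y k) * \<epsilon> k"
    by (simp add: rec)
  also have "\<dots> \<le> f * (\<eta> ^ Y k * (P k * damped_seq \<eta> Y \<epsilon> (a 0) k)) + P (Suc k) * (real (Y k) * \<epsilon> k)"
    using Suc.IH assms(1) assms(2)[of k] eps_le
    by (intro add_mono mult_left_mono) (auto simp: f_def P_def)
  also have "\<dots> = P (Suc k) * damped_seq \<eta> Y \<epsilon> (a 0) (Suc k)"
    by (simp add: P_def f_def algebra_simps)
  finally show ?case by (simp add: P_def)
qed

lemma damped_seq_le_partial_sum:
  assumes "\<And>k. Y k \<in> {0, 1}" "c\<^sub>0 \<ge> 0" "0 \<le> \<eta>" "\<eta> \<le> 1" "\<And>k. \<epsilon> k \<ge> 0"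
  shows "damped_seq \<eta> Y \<epsilon> c\<^sub>0 k \<le> c\<^sub>0 + (\<Sum>j<k. \<epsilon> j)"
proof (induction k)
  case 0
  then show ?case by simp
next
  case (Suc k)
  have "0 \<le> damped_seq \<eta> Y \<epsilon> c\<^sub>0 k" using assms by (intro damped_seq_nonneg)
  then have "damped_seq \<eta> Y \<epsilon> c\<^sub>0 (Suc k) \<le> damped_seq \<eta> Y \<epsilon> c\<^sub>0 k + \<epsilon> k"
    using assms(1)[of k] assms(3,4) assms(5)[of k] mult_right_mono[of \<eta> 1 "damped_seq \<eta> Y \<epsilon> c\<^sub>0 k"] by auto
  then show ?case using Suc.IH by simp
qed

lemma damped_seq_powr_potential:
  fixes q :: real
  assumes "\<And>k. Y k \<in> {0, 1}" "c\<^sub>0 \<ge> 0" "0 \<le> \<eta>" "\<And>k. \<epsilon> k \<ge> 0" "0 < q" "q \<le> 1"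
  defines "c \<equiv> damped_seq \<eta> Y \<epsilon> c\<^sub>0" and "s \<equiv> \<eta> powr q"
  shows "(1 - s) * (\<Sum>i<R. real (Y i) * c (Suc i) powr q) + s * c R powr q
           \<le> s * c\<^sub>0 powr q + (\<Sum>j<R. \<epsilon> j powr q)"
proof (induction R)
  case 0
  then show ?case by (simp add: c_def)
next
  case (Suc R)
  consider "Y R = 0" | "Y R = 1" using assms(1)[of R] by auto
  then show ?case
  proof cases
    case 1
    then show ?thesis using Suc.IH powr_ge_zero[of "\<epsilon> R" q] by (simp add: c_def del: powr_ge_zero)
  next
    case 2
    have c_nonneg: "c R \<ge> 0" unfolding c_def using assms(2-4) by (rule damped_seq_nonneg)
    have "c (Suc R) powr q = (\<eta> * c R + \<epsilon> R) powr q" by (simp add: c_def 2)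
    also have "\<dots> \<le> (\<eta> * c R) powr q + \<epsilon> R powr q"
      using assms(3-6) c_nonneg by (intro powr_add_le_add_powr) auto
    also have "(\<eta> * c R) powr q = s * c R powr q"
      using assms(3) c_nonneg by (simp add: s_def powr_mult)
    finally have step: "c (Suc R) powr q \<le> s * c R powr q + \<epsilon> R powr q" .
    have "(1 - s) * (\<Sum>i<Suc R. real (Y i) * c (Suc i) powr q) + s * c (Suc R) powr q
        = (1 - s) * (\<Sum>i<R. real (Y i) * c (Suc i) powr q) + c (Suc R) powr q"
      by (simp add: 2 algebra_simps)
    then show ?thesis using Suc.IH step by simp
  qed
qed

lemma damped_seq_powr_sum_le:
  fixes q :: real
  assumes "\<And>k. Y k \<in> {0, 1}" "c\<^sub>0 \<ge> 0" "0 < \<eta>" "\<eta> < 1" "\<And>k. \<epsilon> k \<ge> 0" "0 < q" "q \<le> 1"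
  shows "(\<Sum>i<R. real (Y i) * damped_seq \<eta> Y \<epsilon> c\<^sub>0 (Suc i) powr q)
           \<le> ((\<eta> * c\<^sub>0) powr q + (\<Sum>j<R. \<epsilon> j powr q)) / (1 - \<eta> powr q)"
proof -
  have s: "\<eta> powr q < 1" using assms(3,4,6) powr_less_mono2[of q \<eta> 1] by simp
  have "(1 - \<eta> powr q) * (\<Sum>i<R. real (Y i) * damped_seq \<eta> Y \<epsilon> c\<^sub>0 (Suc i) powr q)
          \<le> \<eta> powr q * c\<^sub>0 powr q + (\<Sum>j<R. \<epsilon> j powr q)"
  proof -
    have "(1 - \<eta> powr q) * (\<Sum>i<R. real (Y i) * damped_seq \<eta> Y \<epsilon> c\<^sub>0 (Suc i) powr q)
            + \<eta> powr q * damped_seq \<eta> Y \<epsilon> c\<^sub>0 R powr q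
          \<le> \<eta> powr q * c\<^sub>0 powr q + (\<Sum>j<R. \<epsilon> j powr q)"
      by (rule damped_seq_powr_potential) (use assms in auto)
    moreover have "0 \<le> \<eta> powr q * damped_seq \<eta> Y \<epsilon> c\<^sub>0 R powr q" by simp
    ultimately show ?thesis by linarith
  qed
  moreover have "\<eta> powr q * c\<^sub>0 powr q = (\<eta> * c\<^sub>0) powr q"
    using assms(2,3) by (simp add: powr_mult)
  ultimately show ?thesis
    using s by (subst pos_le_divide_eq) (simp_all add: mult.commute)
qed

lemma perturbed_le_exp_damped_seq:
  fixes a \<nu> \<epsilon> :: "nat \<Rightarrow> real" and Y :: "nat \<Rightarrow> nat"
  assumes "\<And>k. Y k \<in> {0, 1}" "a 0 \<ge> 0" "0 < \<eta>"
    and "\<And>k. \<nu> k \<ge> 0" "summable \<nu>" "\<And>k. \<epsilon> k \<ge> 0"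
    and rec: "\<And>k. a (Suc k) = (\<eta> + \<nu> k) ^ Y k * a k + real (Y k) * \<epsilon> k"
  shows "a k \<le> exp ((\<Sum>i. \<nu> i) / \<eta>) * damped_seq \<eta> Y \<epsilon> (a 0) k"
proof -
  have "(\<Prod>i<k. (1 + \<nu> i / \<eta>) ^ Y i) \<le> exp (\<Sum>i. \<nu> i / \<eta>)"
    using assms(1,3-5) by (intro prod_one_plus_power_le_exp_suminf) auto
  then have "(\<Prod>i<k. (1 + \<nu> i / \<eta>) ^ Y i) \<le> exp ((\<Sum>i. \<nu> i) / \<eta>)"
    using assms(5) by (simp add: suminf_divide)
  moreover have "a k \<le> (\<Prod>i<k. (1 + \<nu> i / \<eta>) ^ Y i) * damped_seq \<eta> Y \<epsilon> (a 0) k"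
    by (rule perturbed_le_prod_damped_seq[where a = a and k = k]) (simp_all add: assms)
  moreover have "damped_seq \<eta> Y \<epsilon> (a 0) k \<ge> 0"
    using assms(2,3,6) by (intro damped_seq_nonneg) auto
  ultimately show ?thesis by (meson mult_right_mono order_trans)
qed

lemma perturbed_powr_sum_le:
  fixes a \<nu> \<epsilon> :: "nat \<Rightarrow> real" and Y :: "nat \<Rightarrow> nat" and q :: real
  assumes "\<And>k. Y k \<in> {0, 1}" "a 0 \<ge> 0" "0 < \<eta>" "\<eta> < 1"
    and "\<And>k. \<nu> k \<ge> 0" "summable \<nu>" "\<And>k. \<epsilon> k \<ge> 0" "0 < q" "q \<le> 1"
    and rec: "\<And>k. a (Suc k) = (\<eta> + \<nu> k) ^ Y k * a k + real (Y k) * \<epsilon> k"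
  defines "C \<equiv> exp ((\<Sum>i. \<nu> i) / \<eta>)"
  shows "(\<Sum>i<R. real (Y i) * a (Suc i) powr q)
           \<le> C powr q * (((\<eta> * a 0) powr q + (\<Sum>j<R. \<epsilon> j powr q)) / (1 - \<eta> powr q))"
proof -
  define c where "c = damped_seq \<eta> Y \<epsilon> (a 0)"
  have a_nonneg: "a k \<ge> 0" for k
    by (induction k) (use assms(2,3,5,7) in \<open>auto simp: rec\<close>)
  have c_nonneg: "c k \<ge> 0" for k
    unfolding c_def using assms(2,3,7) by (intro damped_seq_nonneg) auto
  have "a (Suc i) powr q \<le> C powr q * c (Suc i) powr q" for i
  proof -
    have "a (Suc i) \<le> C * c (Suc i)"
      unfolding C_def c_def using assms(1-3,5-7) rec by (rule perturbed_le_exp_damped_seq)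
    then have "a (Suc i) powr q \<le> (C * c (Suc i)) powr q"
      using a_nonneg assms(8) by (intro powr_mono2) auto
    also have "\<dots> = C powr q * c (Suc i) powr q" using c_nonneg by (simp add: C_def powr_mult)
    finally show ?thesis .
  qed
  then have "(\<Sum>i<R. real (Y i) * a (Suc i) powr q) \<le> (\<Sum>i<R. C powr q * (real (Y i) * c (Suc i) powr q))"
    by (intro sum_mono) (simp add: mult_left_mono algebra_simps)
  also have "\<dots> = C powr q * (\<Sum>i<R. real (Y i) * c (Suc i) powr q)"
    by (simp add: sum_distrib_left)
  also have "\<dots> \<le> C powr q * (((\<eta> * a 0) powr q + (\<Sum>j<R. \<epsilon> j powr q)) / (1 - \<eta> powr q))"
    unfolding c_def by (intro mult_left_mono damped_seq_powr_sum_le) (use assms in auto)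
  finally show ?thesis .
qed

theorem lemma3p5:
  fixes Y :: "nat \<Rightarrow> nat" and a \<nu> \<epsilon> :: "nat \<Rightarrow> real" and \<eta> p :: real
  assumes Y01: "\<And>k. Y k \<in> {0, 1}"
    and a0: "a 0 \<ge> 0"
    and eta: "0 < \<eta>" "\<eta> < 1"
    and p: "0 < p" "p \<le> 1"
    and nu_nonneg: "\<And>k. \<nu> k \<ge> 0" and nu_sum: "summable \<nu>"
    and eps_nonneg: "\<And>k. \<epsilon> k \<ge> 0" and eps_sum: "summable (\<lambda>k. \<epsilon> k powr p)"
    and rec: "\<And>k. a (Suc k) = (\<eta> + \<nu> k) ^ (Y k) * a k + real (Y k) * \<epsilon> k"
  shows "\<forall>R k q. R \<ge> 1 \<and> p \<le> q \<and> q \<le> 1 \<longrightarrow>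
           a (Suc k) \<le> exp ((\<Sum>i. \<nu> i) / \<eta>) * (a 0 + (\<Sum>j. \<epsilon> j))
         \<and> (\<Sum>i<R. real (Y i) * a (Suc i) powr q)
             \<le> exp ((\<Sum>i. \<nu> i) / \<eta>) powr q / (1 - \<eta> powr q)
                 * ((\<eta> * a 0) powr q + (\<Sum>j. \<epsilon> j powr q))"
proof (intro allI impI conjI)
  fix R k :: nat and q :: real
  assume "R \<ge> 1 \<and> p \<le> q \<and> q \<le> 1"
  then have q: "p \<le> q" "q \<le> 1" by auto
  define C where "C = exp ((\<Sum>i. \<nu> i) / \<eta>)"
  have "summable (\<lambda>j. \<epsilon> j powr 1)"
    by (rule summable_powr_larger_exponent[OF eps_nonneg p eps_sum])
  then have "summable \<epsilon>" using eps_nonneg by simp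
  have "a (Suc k) \<le> C * damped_seq \<eta> Y \<epsilon> (a 0) (Suc k)"
    unfolding C_def using Y01 a0 eta(1) nu_nonneg nu_sum eps_nonneg rec
    by (rule perturbed_le_exp_damped_seq)
  also have "\<dots> \<le> C * (a 0 + (\<Sum>j<Suc k. \<epsilon> j))"
    unfolding C_def by (intro mult_left_mono damped_seq_le_partial_sum) (use Y01 a0 eta eps_nonneg in auto)
  also have "\<dots> \<le> C * (a 0 + (\<Sum>j. \<epsilon> j))"
    using \<open>summable \<epsilon>\<close> eps_nonneg
    by (intro mult_left_mono add_left_mono sum_le_suminf) (auto simp: C_def)
  finally show "a (Suc k) \<le> C * (a 0 + (\<Sum>j. \<epsilon> j))" .
  have "summable (\<lambda>j. \<epsilon> j powr q)"
    by (rule summable_powr_larger_exponent[OF eps_nonneg p(1) q(1) eps_sum])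
  have "0 < 1 - \<eta> powr q"
    using eta p q powr_less_mono2[of q \<eta> 1] by simp
  have "(\<Sum>i<R. real (Y i) * a (Suc i) powr q)
      \<le> C powr q * (((\<eta> * a 0) powr q + (\<Sum>j<R. \<epsilon> j powr q)) / (1 - \<eta> powr q))"
    unfolding C_def using Y01 a0 eta nu_nonneg nu_sum eps_nonneg _ q(2) rec
    by (rule perturbed_powr_sum_le) (use p q in auto)
  also have "\<dots> \<le> C powr q * (((\<eta> * a 0) powr q + (\<Sum>j. \<epsilon> j powr q)) / (1 - \<eta> powr q))"
    using \<open>summable (\<lambda>j. \<epsilon> j powr q)\<close> \<open>0 < 1 - \<eta> powr q\<close>
    by (intro mult_left_mono divide_right_mono add_left_mono sum_le_suminf) auto
  finally show "(\<Sum>i<R. real (Y i) * a (Suc i) powr q)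
      \<le> C powr q / (1 - \<eta> powr q) * ((\<eta> * a 0) powr q + (\<Sum>j. \<epsilon> j powr q))"
    by simp
qed

end
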